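(* Let $\Gamma$ be a signed graph on $n$ vertices and let $x=(x_1,\dots,x_n)^{\top}$ be a unit eigenvector of the adjacency matrix $A(\Gamma)$ corresponding to its largest eigenvalue $\lambda_1(\Gamma)$. Let $k$ be an integer. If $\lambda_1(\Gamma) > n-k$, then $x$ has at most $k-2$ zero components.
   Context: A signed graph $\Gamma=(G,\sigma)$ is a simple graph $G$ with a sign function $\sigma:E(G)\to\{-1,+1\}$. Its adjacency matrix $A(\Gamma)=(a_{ij})$ has $a_{ij}=\sigma(v_iv_j)$ if $v_i\sim v_j$ and $a_{ij}=0$ otherwise; $\lambda_1(\Gamma)$ denotes the largest eigenvalue of $A(\Gamma)$. *)

theory Defs
  imports "HOL-Analysis.Analysis"
begin

definition signed_graph :: "('n \<Rightarrow> 'n \<Rightarrow> bool) \<Rightarrow> ('n \<Rightarrow> 'n \<Rightarrow> int) \<Rightarrow> bool" where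
  "signed_graph E \<sigma> \<longleftrightarrow>
     (\<forall>u. \<not> E u u) \<and> (\<forall>u v. E u v \<longrightarrow> E v u) \<and>
     (\<forall>u v. E u v \<longrightarrow> \<sigma> u v = \<sigma> v u \<and> \<sigma> u v \<in> {-1, 1})"

definition adj_matrix :: "('n::finite \<Rightarrow> 'n \<Rightarrow> bool) \<Rightarrow> ('n \<Rightarrow> 'n \<Rightarrow> int) \<Rightarrow> real^'n^'n" where
  "adj_matrix E \<sigma> = (\<chi> i j. if E i j then of_int (\<sigma> i j) else 0)"

definition is_eigenvalue :: "real^'n^'n \<Rightarrow> real \<Rightarrow> bool" where
  "is_eigenvalue A l \<longleftrightarrow> (\<exists>x. x \<noteq> 0 \<and> A *v x = l *\<^sub>R x)"

definition largest_eigenvalue :: "real^'n^'n \<Rightarrow> real" where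
  "largest_eigenvalue A = Max {l. is_eigenvalue A l}"

end

theory Submission
  imports Defs
begin

text \<open>Look at the eigenvalue equation \<open>\<lambda> x\<^sub>i = \<Sum>\<^sub>j \<sigma>\<^sub>i\<^sub>j x\<^sub>j\<close> in a coordinate \<open>i\<close>
where \<open>\<bar>x\<^sub>i\<bar>\<close> is maximal. Only the nonzero coordinates \<open>j \<noteq> i\<close> contribute,
each by at most \<open>\<bar>x\<^sub>i\<bar>\<close>, so \<open>\<bar>\<lambda>\<bar>\<close> is at most the number of nonzero coordinates
minus one, i.e. \<open>n - z - 1\<close> where \<open>z\<close> counts the zero coordinates. Together with
\<open>\<lambda> > n - k\<close> this gives \<open>z \<le> k - 2\<close>.\<close>

lemma ex_max_abs_component:
  fixes x :: "'a::linordered_idom^'n"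
  obtains i where "\<And>j. \<bar>x $ j\<bar> \<le> \<bar>x $ i\<bar>"
proof -
  have "Max (range (\<lambda>j. \<bar>x $ j\<bar>)) \<in> range (\<lambda>j. \<bar>x $ j\<bar>)"
    by (rule Max_in) auto
  then obtain i where "Max (range (\<lambda>j. \<bar>x $ j\<bar>)) = \<bar>x $ i\<bar>" by blast
  then show thesis
    using that Max_ge[of "range (\<lambda>j. \<bar>x $ j\<bar>)"] by fastforce
qed

lemma abs_eigenvalue_le_card_support:
  fixes A :: "real^'n^'n" and x :: "real^'n"
  assumes eigen: "A *v x = l *\<^sub>R x" and "x \<noteq> 0"
    and entry_bound: "\<And>i j. \<bar>A $ i $ j\<bar> \<le> 1"
    and diag_zero: "\<And>i. A $ i $ i = 0"
  shows "\<bar>l\<bar> \<le> real (card {j. x $ j \<noteq> 0}) - 1"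
proof -
  define S where "S = {j. x $ j \<noteq> 0}"
  obtain i where max: "\<And>j. \<bar>x $ j\<bar> \<le> \<bar>x $ i\<bar>"
    using ex_max_abs_component[of x] by blast
  have "i \<in> S"
  proof (rule ccontr)
    assume "i \<notin> S"
    then have "\<And>j. x $ j = 0" using max by (simp add: S_def)
    with \<open>x \<noteq> 0\<close> show False by (simp add: vec_eq_iff)
  qed
  have "l * x $ i = (\<Sum>j\<in>UNIV. A $ i $ j * x $ j)"
    using arg_cong[OF eigen, of "\<lambda>v. v $ i"] by (simp add: matrix_vector_mult_def)
  then have "\<bar>l\<bar> * \<bar>x $ i\<bar> \<le> (\<Sum>j\<in>UNIV. \<bar>A $ i $ j * x $ j\<bar>)"
    by (metis abs_mult sum_abs)
  also have "\<dots> \<le> (\<Sum>j\<in>UNIV. if j \<in> S - {i} then \<bar>x $ i\<bar> else 0)"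
  proof (rule sum_mono)
    fix j
    show "\<bar>A $ i $ j * x $ j\<bar> \<le> (if j \<in> S - {i} then \<bar>x $ i\<bar> else 0)"
    proof (cases "j \<in> S - {i}")
      case True
      have "\<bar>A $ i $ j\<bar> * \<bar>x $ j\<bar> \<le> 1 * \<bar>x $ i\<bar>"
        using entry_bound[of i j] max[of j] by (intro mult_mono) auto
      with True show ?thesis by (simp add: abs_mult)
    next
      case False
      then show ?thesis using diag_zero[of i] by (auto simp: S_def)
    qed
  qed
  also have "\<dots> = real (card (S - {i})) * \<bar>x $ i\<bar>"
    by (simp add: sum.If_cases set_diff_eq)
  finally have "\<bar>l\<bar> \<le> real (card (S - {i}))"
    using \<open>i \<in> S\<close> by (simp add: S_def)
  moreover have "card S = Suc (card (S - {i}))"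
    using \<open>i \<in> S\<close> by (metis card.remove finite)
  ultimately show ?thesis
    by (simp add: S_def)
qed

lemma signed_graph_adj_matrix_entries:
  assumes "signed_graph E \<sigma>"
  shows "\<bar>adj_matrix E \<sigma> $ i $ j\<bar> \<le> 1" and "adj_matrix E \<sigma> $ i $ i = 0"
  using assms by (auto simp: signed_graph_def adj_matrix_def) fastforce

lemma card_Collect_not_add_card_Collect:
  "card {i::'n::finite. \<not> P i} + card {i. P i} = CARD('n)"
  by (subst card_Un_disjoint[symmetric]) (auto intro: arg_cong[where f = card])

theorem lemma3p3:
  fixes E :: "'n::finite \<Rightarrow> 'n \<Rightarrow> bool" and \<sigma> :: "'n \<Rightarrow> 'n \<Rightarrow> int"
    and x :: "real^'n" and k :: int
  assumes "signed_graph E \<sigma>"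
    and "norm x = 1"
    and "adj_matrix E \<sigma> *v x = largest_eigenvalue (adj_matrix E \<sigma>) *\<^sub>R x"
    and "largest_eigenvalue (adj_matrix E \<sigma>) > real CARD('n) - real_of_int k"
  shows "int (card {i. x $ i = 0}) \<le> k - 2"
proof -
  have "x \<noteq> 0" using assms(2) by auto
  then have "largest_eigenvalue (adj_matrix E \<sigma>) \<le> real (card {j. x $ j \<noteq> 0}) - 1"
    using abs_eigenvalue_le_card_support[OF assms(3)]
      signed_graph_adj_matrix_entries[OF assms(1)] by fastforce
  with assms(4) card_Collect_not_add_card_Collect[of "\<lambda>i. x $ i = 0"] show ?thesis by linarith
qed

end
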